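(* Let $\mathbb{X},\mathbb{Y}$ be real normed linear spaces, $1\le p<\infty$, and $\mathbb{Z}=\mathbb{X}\oplus_p\mathbb{Y}$. Let $z_1=(x_1,y_1)$, $z_2=(x_2,y_2)\in\mathbb{Z}$ with $x_1,x_2\in\mathbb{X}\setminus\{0\}$ and $y_1,y_2\in\mathbb{Y}\setminus\{0\}$. (i) If $(z_1,z_2)$ is a parallel pair in $\mathbb{Z}$, then $(x_1,x_2)$ is a parallel pair in $\mathbb{X}$ and $(y_1,y_2)$ is a parallel pair in $\mathbb{Y}$. (ii) If $(z_1,z_2)$ is a TEA pair in $\mathbb{Z}$, then $(x_1,x_2)$ is a TEA pair in $\mathbb{X}$ and $(y_1,y_2)$ is a TEA pair in $\mathbb{Y}$.
   Context: For $1\le p<\infty$, $\mathbb{X}\oplus_p\mathbb{Y}$ is $\mathbb{X}\times\mathbb{Y}$ with norm $\|(x,y)\|=(\|x\|^p+\|y\|^p)^{1/p}$. $(x,y)$ is a parallel pair if $\|x+\lambda y\|=\|x\|+\|y\|$ for some scalar $\lambda$ with $|\lambda|=1$; $(x,y)$ is a TEA pair if $\|x+y\|=\|x\|+\|y\|$. *)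

theory Defs
  imports "HOL-Analysis.Analysis"
begin

text \<open>Vector operations on pairs are the componentwise ones of Product_Vector;
  the library's built-in norm on pairs (the 2-norm) is NOT used.\<close>
definition psum_norm :: "real \<Rightarrow> ('a::real_normed_vector \<times> 'b::real_normed_vector) \<Rightarrow> real" where
  "psum_norm p z = (norm (fst z) powr p + norm (snd z) powr p) powr (1 / p)"

definition parallel_pair :: "'a::real_normed_vector \<Rightarrow> 'a \<Rightarrow> bool" where
  "parallel_pair x y \<longleftrightarrow> (\<exists>c::real. \<bar>c\<bar> = 1 \<and> norm (x + c *\<^sub>R y) = norm x + norm y)"

definition tea_pair :: "'a::real_normed_vector \<Rightarrow> 'a \<Rightarrow> bool" where
  "tea_pair x y \<longleftrightarrow> norm (x + y) = norm x + norm y"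

definition psum_parallel_pair :: "real \<Rightarrow> ('a::real_normed_vector \<times> 'b::real_normed_vector) \<Rightarrow> ('a \<times> 'b) \<Rightarrow> bool" where
  "psum_parallel_pair p z w \<longleftrightarrow>
     (\<exists>c::real. \<bar>c\<bar> = 1 \<and> psum_norm p (z + c *\<^sub>R w) = psum_norm p z + psum_norm p w)"

definition psum_tea_pair :: "real \<Rightarrow> ('a::real_normed_vector \<times> 'b::real_normed_vector) \<Rightarrow> ('a \<times> 'b) \<Rightarrow> bool" where
  "psum_tea_pair p z w \<longleftrightarrow> psum_norm p (z + w) = psum_norm p z + psum_norm p w"

end

theory Submission
  imports Defs
begin

text \<open>Write \<open>N(a,b) = (a^p + b^p)^(1/p)\<close> for \<open>a, b \<ge> 0\<close>. For \<open>z = (x\<^sub>1,y\<^sub>1)\<close>, \<open>w = (x\<^sub>2,y\<^sub>2)\<close>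
  the triangle inequality in each factor, monotonicity of \<open>N\<close> and Minkowski's inequality give
  \<open>\<parallel>z + w\<parallel> = N(\<parallel>x\<^sub>1+x\<^sub>2\<parallel>, \<parallel>y\<^sub>1+y\<^sub>2\<parallel>) \<le> N(\<parallel>x\<^sub>1\<parallel>+\<parallel>x\<^sub>2\<parallel>, \<parallel>y\<^sub>1\<parallel>+\<parallel>y\<^sub>2\<parallel>) \<le> \<parallel>z\<parallel> + \<parallel>w\<parallel>\<close>.
  If \<open>(z,w)\<close> is a TEA pair both inequalities are equalities, and since \<open>N\<close> is strictly monotone in
  each argument the first equality forces \<open>\<parallel>x\<^sub>1+x\<^sub>2\<parallel> = \<parallel>x\<^sub>1\<parallel>+\<parallel>x\<^sub>2\<parallel>\<close> and likewise for \<open>y\<close>.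
  A parallel pair \<open>(z,w)\<close> is a TEA pair \<open>(z, \<lambda>w)\<close> with \<open>|\<lambda>| = 1\<close>, and \<open>\<parallel>\<lambda>w\<parallel> = \<parallel>w\<parallel>\<close>.\<close>

lemma convex_on_powr_nonneg:
  fixes p :: real
  assumes "1 \<le> p"
  shows "convex_on {0..} (\<lambda>x::real. x powr p)"
proof
  fix t x y :: real
  assume t: "0 < t" "t < 1" and xy: "x \<in> {0..}" "y \<in> {0..}"
  have scaled_le: "(s * z) powr p \<le> s * z powr p" if "0 \<le> s" "s \<le> 1" "0 \<le> z" for s z :: real
  proof -
    have "s powr p \<le> s powr 1"
      using powr_mono' assms that by blast
    then show ?thesis
      using that by (simp add: powr_mult mult_right_mono)
  qed
  consider "x = 0" | "y = 0" | "0 < x" "0 < y"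
    using xy by fastforce
  then show "((1 - t) *\<^sub>R x + t *\<^sub>R y) powr p \<le> (1 - t) * x powr p + t * y powr p"
  proof cases
    case 1
    then show ?thesis using scaled_le[of t y] t xy by simp
  next
    case 2
    then show ?thesis using scaled_le[of "1 - t" x] t xy by simp
  next
    case 3
    then show ?thesis using convex_onD[OF powr_convex[OF assms], of t x y] t by simp
  qed
qed (rule convex_real_interval)

lemma psum_norm_norms: "psum_norm p z = psum_norm p (norm (fst z), norm (snd z))"
  by (simp add: psum_norm_def)

lemma psum_norm_scaleR:
  assumes "0 < p"
  shows "psum_norm p (c *\<^sub>R z) = \<bar>c\<bar> * psum_norm p z"
proof -
  have "psum_norm p (c *\<^sub>R z) = (\<bar>c\<bar> powr p * (norm (fst z) powr p + norm (snd z) powr p)) powr (1 / p)"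
    by (simp add: psum_norm_def powr_mult distrib_left)
  also have "\<dots> = \<bar>c\<bar> * psum_norm p z"
    using assms by (simp add: psum_norm_def powr_mult powr_powr)
  finally show ?thesis .
qed

lemma psum_norm_powr:
  assumes "0 < p"
  shows "psum_norm p z powr p = norm (fst z) powr p + norm (snd z) powr p"
  using assms by (simp add: psum_norm_def powr_powr)

lemma psum_norm_nonneg_reals_mono:
  fixes u v a b :: real
  assumes "0 < p" "0 \<le> u" "u \<le> a" "0 \<le> v" "v \<le> b"
  shows "psum_norm p (u, v) \<le> psum_norm p (a, b)"
  using assms by (simp add: psum_norm_def powr_mono2 add_mono)

lemma psum_norm_nonneg_reals_mono_eqD:
  fixes u v a b :: real
  assumes p: "0 < p" and uv: "0 \<le> u" "u \<le> a" "0 \<le> v" "v \<le> b"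
    and eq: "psum_norm p (u, v) = psum_norm p (a, b)"
  shows "u = a \<and> v = b"
proof -
  have "u powr p + v powr p = a powr p + b powr p"
    using psum_norm_powr[OF p, of "(u, v)"] psum_norm_powr[OF p, of "(a, b)"] eq uv by simp
  moreover have "u powr p \<le> a powr p" "v powr p \<le> b powr p"
    using p uv by (simp_all add: powr_mono2)
  moreover have "u < a \<Longrightarrow> u powr p < a powr p" "v < b \<Longrightarrow> v powr p < b powr p"
    using p uv by (simp_all add: powr_less_mono2)
  ultimately show ?thesis
    using uv by fastforce
qed

lemma psum_norm_nonneg_reals_add_le:
  fixes a b c d :: real
  assumes p: "1 \<le> p" and nonneg: "0 \<le> a" "0 \<le> b" "0 \<le> c" "0 \<le> d"
  shows "psum_norm p (a + c, b + d) \<le> psum_norm p (a, b) + psum_norm p (c, d)"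
proof -
  define s t where "s = psum_norm p (a, b)" and "t = psum_norm p (c, d)"
  have s_powr: "s powr p = a powr p + b powr p" and t_powr: "t powr p = c powr p + d powr p"
    using psum_norm_powr[of p "(a, b)"] psum_norm_powr[of p "(c, d)"] p nonneg
    unfolding s_def t_def by simp_all
  consider "s = 0" | "t = 0" | "0 < s" "0 < t"
    unfolding s_def t_def psum_norm_def by fastforce
  then show ?thesis
  proof cases
    case 1
    then have "a = 0" "b = 0"
      using s_powr p nonneg by (simp_all add: add_nonneg_eq_0_iff)
    then show ?thesis using 1 unfolding s_def t_def by simp
  next
    case 2
    then have "c = 0" "d = 0"
      using t_powr p nonneg by (simp_all add: add_nonneg_eq_0_iff)
    then show ?thesis using 2 unfolding s_def t_def by simp
  next
    case 3
    have convex_step: "((e + f) / (s + t)) powr p \<le> s / (s + t) * (e / s) powr p + t / (s + t) * (f / t) powr p"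
      if "0 \<le> e" "0 \<le> f" for e f
    proof -
      have weight: "1 - t / (s + t) = s / (s + t)"
        using 3 by (simp add: field_simps)
      then have "(1 - t / (s + t)) *\<^sub>R (e / s) + (t / (s + t)) *\<^sub>R (f / t) = (e + f) / (s + t)"
        using 3 by (simp add: add_divide_distrib)
      then show ?thesis
        using convex_onD[OF convex_on_powr_nonneg[OF p], of "t / (s + t)" "e / s" "f / t"] weight 3 that
        by simp
    qed
    have "(a + c) powr p + (b + d) powr p \<le> (s + t) powr p"
    proof -
      have "((a + c) / (s + t)) powr p + ((b + d) / (s + t)) powr p
          \<le> s / (s + t) * ((a / s) powr p + (b / s) powr p) + t / (s + t) * ((c / t) powr p + (d / t) powr p)"
        using convex_step[of a c] convex_step[of b d] nonneg by (simp add: algebra_simps)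
      also have "(a / s) powr p + (b / s) powr p = 1"
        using 3 nonneg by (simp add: powr_divide add_divide_distrib[symmetric] s_powr[symmetric])
      also have "(c / t) powr p + (d / t) powr p = 1"
        using 3 nonneg by (simp add: powr_divide add_divide_distrib[symmetric] t_powr[symmetric])
      finally show ?thesis
        using 3 nonneg by (simp add: powr_divide add_divide_distrib[symmetric] divide_le_eq)
    qed
    then have "((a + c) powr p + (b + d) powr p) powr (1 / p) \<le> ((s + t) powr p) powr (1 / p)"
      using p by (intro powr_mono2) auto
    then show ?thesis
      using 3 p nonneg by (simp add: psum_norm_def powr_powr s_def t_def)
  qed
qed

lemma psum_tea_pair_imp_tea_pairs:
  fixes z w :: "'a::real_normed_vector \<times> 'b::real_normed_vector"
  assumes p: "1 \<le> p" and tea: "psum_tea_pair p z w"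
  shows "tea_pair (fst z) (fst w) \<and> tea_pair (snd z) (snd w)"
proof -
  obtain x1 y1 x2 y2 where z: "z = (x1, y1)" and w: "w = (x2, y2)"
    by (cases z, cases w)
  let ?norms = "psum_norm p (norm (x1 + x2), norm (y1 + y2))"
  let ?sums = "psum_norm p (norm x1 + norm x2, norm y1 + norm y2)"
  have "psum_norm p (z + w) = ?norms"
    using psum_norm_norms[of p "z + w"] z w by simp
  moreover have "?norms \<le> ?sums"
    using p by (intro psum_norm_nonneg_reals_mono) (simp_all add: norm_triangle_ineq)
  moreover have "?sums \<le> psum_norm p z + psum_norm p w"
    using psum_norm_nonneg_reals_add_le[OF p, of "norm x1" "norm y1" "norm x2" "norm y2"]
      psum_norm_norms[of p z] psum_norm_norms[of p w] z w
    by simp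
  ultimately have "?norms = ?sums"
    using tea unfolding psum_tea_pair_def by linarith
  then have "norm (x1 + x2) = norm x1 + norm x2 \<and> norm (y1 + y2) = norm y1 + norm y2"
    using p by (intro psum_norm_nonneg_reals_mono_eqD) (simp_all add: norm_triangle_ineq)
  then show ?thesis
    using z w unfolding tea_pair_def by simp
qed

theorem mainTheorem4:
  fixes p :: real
    and x1 x2 :: "'a::real_normed_vector"
    and y1 y2 :: "'b::real_normed_vector"
  assumes "1 \<le> p"
    and "x1 \<noteq> 0" and "x2 \<noteq> 0" and "y1 \<noteq> 0" and "y2 \<noteq> 0"
  shows "(psum_parallel_pair p (x1, y1) (x2, y2) \<longrightarrow> parallel_pair x1 x2 \<and> parallel_pair y1 y2)
       \<and> (psum_tea_pair p (x1, y1) (x2, y2) \<longrightarrow> tea_pair x1 x2 \<and> tea_pair y1 y2)"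
proof (intro conjI impI)
  assume "psum_parallel_pair p (x1, y1) (x2, y2)"
  then obtain c where c: "\<bar>c\<bar> = 1"
    and "psum_norm p ((x1, y1) + c *\<^sub>R (x2, y2)) = psum_norm p (x1, y1) + psum_norm p (x2, y2)"
    unfolding psum_parallel_pair_def by blast
  then have "psum_tea_pair p (x1, y1) (c *\<^sub>R (x2, y2))"
    using \<open>1 \<le> p\<close> psum_norm_scaleR[of p c "(x2, y2)"] unfolding psum_tea_pair_def by simp
  then have "tea_pair x1 (c *\<^sub>R x2) \<and> tea_pair y1 (c *\<^sub>R y2)"
    using psum_tea_pair_imp_tea_pairs[OF \<open>1 \<le> p\<close>] by fastforce
  with c show "parallel_pair x1 x2" "parallel_pair y1 y2"
    unfolding parallel_pair_def tea_pair_def by auto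
next
  assume "psum_tea_pair p (x1, y1) (x2, y2)"
  then show "tea_pair x1 x2" "tea_pair y1 y2"
    using psum_tea_pair_imp_tea_pairs[OF \<open>1 \<le> p\<close>] by fastforce+
qed

end
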